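(* Let $\{\tilde{\mathbf M}_t\}$ be a forward-in-time continuous-time Markov jump process on $\mathcal N$ whose generator on each interval $(t_d,t_{d+1}]$ is $\tilde{\boldsymbol\Lambda}^d$, started from any initial distribution. Let $C_t$ denote the number of type-$c$ haplotypes in $\tilde{\mathbf M}_t$, i.e. $C_t=n^{(c)}$ when $\tilde{\mathbf M}_t=\mathbf n$. Then $\{C_t\}$ is itself a (forward-in-time) Markov jump process on $\{0,1,\dots,n\}$ whose generator on $(t_d,t_{d+1}]$ is $\boldsymbol\Gamma^d$. Moreover, for all $m,m'\in\{0,\dots,n\}$ and $s\ge0$, and provided $\rho>0$, $$\gamma^d_m\big[e^{\boldsymbol\Gamma^d s}\big]_{m,m'}=\gamma^d_{m'}\big[e^{\boldsymbol\Gamma^d s}\big]_{m',m},$$ where $(\gamma^d_0,\dots,\gamma^d_n)$ is the stationary distribution of $\boldsymbol\Gamma^d$.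
   Context: **Two-locus model.** - There are two loci, the left ("$a$") and the right ("$b$"). Alleles take values in a finite set $\mathcal A$. - Mutation occurs at rate $\theta/2$ per locus per lineage; given a mutation, allele $i$ becomes $j$ with probability $P_{ij}$, where $\mathbf P=(P_{ij})$ is a stochastic matrix on $\mathcal A$. The recombination parameter is $\rho\ge0$. - The population size is piecewise constant: there are times $-\infty=t_{-D}<t_{-D+1}<\dots<t_{-1}<t_0=0$, and on $(t_d,t_{d+1}]$ the scaled size is $\eta_d>0$. **Haplotypes and configurations.** - A haplotype is of type $a$, $b$ or $c$: - type $a$ is $(i,* )$; - type $b$ is $( *,j)$; - type $c$ is $(k,\ell)$; with $i,j,k,\ell\in\mathcal A$ and $*$ denoting a missing allele. - A configuration $\mathbf n=\{n_{i*},n_{*j},n_{k\ell}\}$ records the multiplicities of the haplotypes. Write $n^{(a)}=\sum_i n_{i*}$, $n^{(b)}=\sum_j n_{*j}$, $n^{(c)}=\sum_{k,\ell}n_{k\ell}$ and $n^{(abc)}=(n^{(a)},n^{(b)},n^{(c)})$. - $\mathbf e_h$ is the configuration consisting of a single haplotype $h$. **The space $\mathcal N$ and the generator $\tilde{\boldsymbol\Lambda}^d$.** - Fix $n\ge1$ and let $\mathcal N=\{\mathbf n: n^{(abc)}=(k,k,n-k),\ 0\le k\le n\}$. - $\tilde{\boldsymbol\Lambda}^d$ is the generator matrix indexed by $\mathcal N$. For $\mathbf m\ne\mathbf n$, its entry $\tilde\Lambda^d_{\mathbf n,\mathbf m}$ is the sum of all the following rates (over $i,j,k,l\in\mathcal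 A$) whose listed target equals $\mathbf m$: - target $\mathbf n-\mathbf e_{i*}+\mathbf e_{j*}$, rate $\frac1{\eta_d}n_{i*}\big(\tfrac12 n_{j*}+\sum_{k}n_{jk}\big)+\frac\theta2P_{ij}n_{i*}$; - target $\mathbf n-\mathbf e_{*i}+\mathbf e_{*j}$, rate $\frac1{\eta_d}n_{*i}\big(\tfrac12 n_{*j}+\sum_k n_{kj}\big)+\frac\theta2P_{ij}n_{*i}$; - target $\mathbf n-\mathbf e_{ij}+\mathbf e_{kl}$, rate $\frac1{2\eta_d}n_{ij}n_{kl}+\frac\theta2(\delta_{ik}P_{jl}+\delta_{jl}P_{ik})n_{ij}$; - target $\mathbf n-\mathbf e_{ij}+\mathbf e_{i*}+\mathbf e_{*j}$, rate $\frac\rho2 n_{ij}$; - target $\mathbf n-\mathbf e_{i*}-\mathbf e_{*j}+\mathbf e_{ij}$, rate $\frac1{\eta_d}n_{i*}n_{*j}$. - The diagonal entries are chosen so that each row of $\tilde{\boldsymbol\Lambda}^d$ sums to $0$. **The matrix $\boldsymbol\Gamma^d$.** $\boldsymbol\Gamma^d$ is the tridiagonal generator indexed by $\{0,1,\dots,n\}$ with - $\Gamma^d_{m,m-1}=\frac\rho2 m$, - $\Gamma^d_{m,m+1}=\frac{(n-m)^2}{\eta_d}$, - $\Gamma^d_{m,m}=-\Gamma^d_{m,m-1}-\Gamma^d_{m,m+1}$. *)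

theory Defs
  imports "HOL-Probability.Probability" "HOL-Library.Multiset"
begin

text \<open>Type a haplotype (i,*) is HA i, type b haplotype (*,j) is HB j,
  type c haplotype (k,l) is HC k l. A configuration is a multiset of haplotypes.\<close>

datatype 'a hap = HA 'a | HB 'a | HC 'a 'a

fun is_a :: "'a hap \<Rightarrow> bool" where
  "is_a (HA _) = True" | "is_a _ = False"
fun is_b :: "'a hap \<Rightarrow> bool" where
  "is_b (HB _) = True" | "is_b _ = False"
fun is_c :: "'a hap \<Rightarrow> bool" where
  "is_c (HC _ _) = True" | "is_c _ = False"

definition na :: "'a hap multiset \<Rightarrow> nat" where
  "na c = size (filter_mset is_a c)"
definition nb :: "'a hap multiset \<Rightarrow> nat" where
  "nb c = size (filter_mset is_b c)"
definition nc :: "'a hap multiset \<Rightarrow> nat" where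
  "nc c = size (filter_mset is_c c)"

definition haps :: "'a set \<Rightarrow> 'a hap set" where
  "haps A = HA ` A \<union> HB ` A \<union> {HC i j | i j. i \<in> A \<and> j \<in> A}"

definition confN :: "'a set \<Rightarrow> nat \<Rightarrow> 'a hap multiset set" where
  "confN A n = {c. set_mset c \<subseteq> haps A \<and>
      (\<exists>k\<le>n. na c = k \<and> nb c = k \<and> nc c = n - k)}"

definition mid :: "'s \<Rightarrow> 's \<Rightarrow> real" where
  "mid x y = (if x = y then 1 else 0)"

definition mmult :: "'s set \<Rightarrow> ('s \<Rightarrow> 's \<Rightarrow> real) \<Rightarrow> ('s \<Rightarrow> 's \<Rightarrow> real) \<Rightarrow> 's \<Rightarrow> 's \<Rightarrow> real" where
  "mmult S M1 M2 x y = (\<Sum>z\<in>S. M1 x z * M2 z y)"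

fun mpow :: "'s set \<Rightarrow> ('s \<Rightarrow> 's \<Rightarrow> real) \<Rightarrow> nat \<Rightarrow> 's \<Rightarrow> 's \<Rightarrow> real" where
  "mpow S Q 0 = mid"
| "mpow S Q (Suc k) = mmult S (mpow S Q k) Q"

definition mexp :: "'s set \<Rightarrow> ('s \<Rightarrow> 's \<Rightarrow> real) \<Rightarrow> real \<Rightarrow> 's \<Rightarrow> 's \<Rightarrow> real" where
  "mexp S Q s x y = (\<Sum>k. s ^ k / fact k * mpow S Q k x y)"

text \<open>Off-diagonal rate of the generator tilde-Lambda^d (eta = eta_d): the sum
  of all listed rates whose target equals m.\<close>
definition lam_off :: "'a set \<Rightarrow> ('a \<Rightarrow> 'a \<Rightarrow> real) \<Rightarrow> real \<Rightarrow> real \<Rightarrow> real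
    \<Rightarrow> 'a hap multiset \<Rightarrow> 'a hap multiset \<Rightarrow> real" where
  "lam_off A P \<theta> \<rho> \<eta> nn mm =
     (\<Sum>i\<in>A. \<Sum>j\<in>A. if mm = nn - {#HA i#} + {#HA j#} then
        1/\<eta> * real (count nn (HA i)) *
          (1/2 * real (count nn (HA j)) + (\<Sum>k\<in>A. real (count nn (HC j k))))
        + \<theta>/2 * P i j * real (count nn (HA i)) else 0)
   + (\<Sum>i\<in>A. \<Sum>j\<in>A. if mm = nn - {#HB i#} + {#HB j#} then
        1/\<eta> * real (count nn (HB i)) *
          (1/2 * real (count nn (HB j)) + (\<Sum>k\<in>A. real (count nn (HC k j))))
        + \<theta>/2 * P i j * real (count nn (HB i)) else 0)
   + (\<Sum>i\<in>A. \<Sum>j\<in>A. \<Sum>k\<in>A. \<Sum>l\<in>A. if mm = nn - {#HC i j#} + {#HC k l#} then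
        1/(2*\<eta>) * real (count nn (HC i j)) * real (count nn (HC k l))
        + \<theta>/2 * ((if i = k then P j l else 0) + (if j = l then P i k else 0))
            * real (count nn (HC i j)) else 0)
   + (\<Sum>i\<in>A. \<Sum>j\<in>A. if mm = nn - {#HC i j#} + {#HA i#} + {#HB j#} then
        \<rho>/2 * real (count nn (HC i j)) else 0)
   + (\<Sum>i\<in>A. \<Sum>j\<in>A. if mm = nn - {#HA i#} - {#HB j#} + {#HC i j#} then
        1/\<eta> * real (count nn (HA i)) * real (count nn (HB j)) else 0)"

definition Lam :: "'a set \<Rightarrow> ('a \<Rightarrow> 'a \<Rightarrow> real) \<Rightarrow> real \<Rightarrow> real \<Rightarrow> nat \<Rightarrow> real
    \<Rightarrow> 'a hap multiset \<Rightarrow> 'a hap multiset \<Rightarrow> real" where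
  "Lam A P \<theta> \<rho> n \<eta> nn mm =
     (if nn = mm then - (\<Sum>m'\<in>confN A n - {nn}. lam_off A P \<theta> \<rho> \<eta> nn m')
      else lam_off A P \<theta> \<rho> \<eta> nn mm)"

definition Gam :: "real \<Rightarrow> nat \<Rightarrow> real \<Rightarrow> nat \<Rightarrow> nat \<Rightarrow> real" where
  "Gam \<rho> n \<eta> m m' =
     (if m' + 1 = m then \<rho>/2 * real m
      else if m' = m + 1 then real ((n - m)^2) / \<eta>
      else if m' = m then - (\<rho>/2 * real m + real ((n - m)^2) / \<eta>)
      else 0)"

text \<open>Epochs are indexed by d in {-D..-1}; epoch d is (t d, t (d+1)], with
  t (-D) = -infinity (the value t (-D) is ignored) and t 0 = 0.
  elen gives the length of the overlap of (u,v] with epoch d.\<close>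
definition elen :: "nat \<Rightarrow> (int \<Rightarrow> real) \<Rightarrow> int \<Rightarrow> real \<Rightarrow> real \<Rightarrow> real" where
  "elen D t d u v =
     max 0 (min v (t (d+1)) - (if d = - int D then u else max u (t d)))"

text \<open>Transition matrix from time u to time v (u <= v <= 0) of the jump process
  whose generator on epoch d is Q d.\<close>
definition ptrans :: "'s set \<Rightarrow> (int \<Rightarrow> 's \<Rightarrow> 's \<Rightarrow> real) \<Rightarrow> nat \<Rightarrow> (int \<Rightarrow> real)
    \<Rightarrow> real \<Rightarrow> real \<Rightarrow> 's \<Rightarrow> 's \<Rightarrow> real" where
  "ptrans S Q D t u v =
     foldr (\<lambda>d M. mmult S (mexp S (Q d) (elen D t d u v)) M) [- int D..-1] mid"

text \<open>A process X on [T0,0] (on probability space Pr, values in S) is a Markov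
  jump process with generator Q d on epoch d, expressed through its
  finite-dimensional distributions.\<close>
definition markov_fdd :: "'w measure \<Rightarrow> 's set \<Rightarrow> (int \<Rightarrow> 's \<Rightarrow> 's \<Rightarrow> real) \<Rightarrow> nat
    \<Rightarrow> (int \<Rightarrow> real) \<Rightarrow> real \<Rightarrow> (real \<Rightarrow> 'w \<Rightarrow> 's) \<Rightarrow> bool" where
  "markov_fdd Pr S Q D t T0 X \<longleftrightarrow>
     (\<forall>K (s :: nat \<Rightarrow> real) (x :: nat \<Rightarrow> 's).
        T0 \<le> s 0 \<and> s K \<le> 0 \<and> (\<forall>i<K. s i \<le> s (Suc i)) \<and> (\<forall>i\<le>K. x i \<in> S) \<longrightarrow>
        measure Pr {\<omega> \<in> space Pr. \<forall>i\<le>K. X (s i) \<omega> = x i}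
        = measure Pr {\<omega> \<in> space Pr. X (s 0) \<omega> = x 0}
          * (\<Prod>i<K. ptrans S Q D t (s i) (s (Suc i)) (x i) (x (Suc i))))"

end

theory Submission
  imports Defs
begin

text \<open>Every transition of \<open>Lam\<close> changes the number \<open>nc\<close> of type-c haplotypes by at most one,
  and the total rate from a configuration into the configurations with a given value of \<open>nc\<close>
  depends on the configuration only through \<open>nc\<close>: recombination removes a c-haplotype at rate
  \<open>\<rho>/2 \<cdot> nc\<close>, and joining an a- with a b-haplotype creates one at rate
  \<open>na \<cdot> nb / \<eta> = (n - nc)\<^sup>2 / \<eta>\<close>. So \<open>Lam\<close> is lumpable onto \<open>Gam\<close> along \<open>nc\<close>; lumpability
  passes to products, powers, exponentials and hence to the piecewise transition matrices,
  and summing the finite-dimensional distributions of the configuration chain over the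
  fibres of \<open>nc\<close> gives those of the \<open>Gam\<close>-chain. \<open>Gam\<close> is a birth--death generator, so every
  stationary vector satisfies detailed balance, which is inherited by all powers of \<open>Gam\<close>
  and hence by \<open>e\<^bsup>Gam s\<^esup>\<close>.\<close>

lemma mmult_assoc: "mmult S (mmult S A B) C x y = mmult S A (mmult S B C) x y"
proof -
  have "mmult S (mmult S A B) C x y = (\<Sum>z\<in>S. \<Sum>w\<in>S. A x w * B w z * C z y)"
    unfolding mmult_def by (simp add: sum_distrib_right)
  also have "\<dots> = (\<Sum>w\<in>S. \<Sum>z\<in>S. A x w * B w z * C z y)" by (rule sum.swap)
  also have "\<dots> = mmult S A (mmult S B C) x y"
    unfolding mmult_def by (simp add: sum_distrib_left mult.assoc)
  finally show ?thesis .
qed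

lemma mmult_cong:
  "(\<And>z. z \<in> S \<Longrightarrow> A x z = A' x z) \<Longrightarrow> (\<And>z. z \<in> S \<Longrightarrow> B z y = B' z y)
    \<Longrightarrow> mmult S A B x y = mmult S A' B' x y"
  unfolding mmult_def by (intro sum.cong) auto

lemma mmult_mid_left:
  assumes "finite S" "x \<in> S"
  shows "mmult S mid Q x y = Q x y"
proof -
  have "mmult S mid Q x y = (\<Sum>z\<in>S. if x = z then Q z y else 0)"
    unfolding mmult_def mid_def by (intro sum.cong) auto
  then show ?thesis using assms by simp
qed

lemma mmult_mid_right:
  assumes "finite S" "y \<in> S"
  shows "mmult S Q mid x y = Q x y"
proof -
  have "mmult S Q mid x y = (\<Sum>z\<in>S. if z = y then Q x z else 0)"
    unfolding mmult_def mid_def by (intro sum.cong) auto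
  then show ?thesis using assms by simp
qed

lemma mpow_Suc_left:
  assumes S: "finite S" and "x \<in> S" "y \<in> S"
  shows "mpow S Q (Suc k) x y = mmult S Q (mpow S Q k) x y"
  using assms(2,3)
proof (induction k arbitrary: x y)
  case 0
  then show ?case by (simp add: mmult_mid_left mmult_mid_right S)
next
  case (Suc k)
  have "mpow S Q (Suc (Suc k)) x y = mmult S (mmult S Q (mpow S Q k)) Q x y"
    using Suc by (auto intro: mmult_cong)
  also have "\<dots> = mmult S Q (mpow S Q (Suc k)) x y" by (simp add: mmult_assoc)
  finally show ?case .
qed

lemma abs_mpow_le:
  assumes S: "finite S" and y: "y \<in> S"
  shows "\<bar>mpow S Q k x y\<bar> \<le> (real (card S) * (\<Sum>z\<in>S. \<Sum>w\<in>S. \<bar>Q z w\<bar>)) ^ k"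
  using y
proof (induction k arbitrary: y)
  case 0 then show ?case by (simp add: mid_def)
next
  case (Suc k)
  let ?B = "\<Sum>z\<in>S. \<Sum>w\<in>S. \<bar>Q z w\<bar>"
  have entry: "\<bar>Q z w\<bar> \<le> ?B" if "z \<in> S" "w \<in> S" for z w
  proof -
    have "\<bar>Q z w\<bar> \<le> (\<Sum>w\<in>S. \<bar>Q z w\<bar>)" using S that by (intro member_le_sum) auto
    also have "\<dots> \<le> ?B"
      using S that by (intro member_le_sum[where f = "\<lambda>z. \<Sum>w\<in>S. \<bar>Q z w\<bar>"]) (auto intro: sum_nonneg)
    finally show ?thesis .
  qed
  have "0 \<le> ?B" by (intro sum_nonneg) auto
  have "\<bar>mpow S Q (Suc k) x y\<bar> \<le> (\<Sum>z\<in>S. \<bar>mpow S Q k x z\<bar> * \<bar>Q z y\<bar>)"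
    by (simp add: mmult_def abs_mult[symmetric] sum_abs)
  also have "\<dots> \<le> (\<Sum>z\<in>S. (real (card S) * ?B) ^ k * ?B)"
    using Suc entry \<open>0 \<le> ?B\<close> by (intro sum_mono mult_mono) auto
  also have "\<dots> = (real (card S) * ?B) ^ Suc k" by (simp add: mult_ac)
  finally show ?case .
qed

lemma summable_mexp_series:
  assumes S: "finite S" and y: "y \<in> S"
  shows "summable (\<lambda>k. s ^ k / fact k * mpow S Q k x y)"
proof (rule summable_comparison_test'[where N = 0])
  let ?c = "real (card S) * (\<Sum>z\<in>S. \<Sum>w\<in>S. \<bar>Q z w\<bar>)"
  show "summable (\<lambda>k. inverse (fact k) * (\<bar>s\<bar> * ?c) ^ k)" by (rule summable_exp)
  fix k
  have "norm (s ^ k / fact k * mpow S Q k x y) = \<bar>s\<bar> ^ k / fact k * \<bar>mpow S Q k x y\<bar>"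
    by (simp add: abs_mult power_abs)
  also have "\<dots> \<le> \<bar>s\<bar> ^ k / fact k * ?c ^ k"
    using abs_mpow_le[OF S y] by (intro mult_left_mono) auto
  also have "\<dots> = inverse (fact k) * (\<bar>s\<bar> * ?c) ^ k" by (simp add: power_mult_distrib field_simps)
  finally show "norm (s ^ k / fact k * mpow S Q k x y) \<le> inverse (fact k) * (\<bar>s\<bar> * ?c) ^ k" .
qed

section \<open>Lumpability\<close>

definition lumpable :: "'s set \<Rightarrow> 't set \<Rightarrow> ('s \<Rightarrow> 't) \<Rightarrow> ('s \<Rightarrow> 's \<Rightarrow> real) \<Rightarrow> ('t \<Rightarrow> 't \<Rightarrow> real) \<Rightarrow> bool" where
  "lumpable S T f M N \<longleftrightarrow> (\<forall>x\<in>S. \<forall>b\<in>T. (\<Sum>y\<in>{y \<in> S. f y = b}. M x y) = N (f x) b)"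

lemma lumpable_mid: "finite S \<Longrightarrow> f ` S \<subseteq> T \<Longrightarrow> lumpable S T f mid mid"
  unfolding lumpable_def by (auto simp: mid_def sum.delta' cong: if_cong)

lemma lumpable_mmult:
  assumes S: "finite S" and T: "finite T" and f: "f ` S \<subseteq> T"
    and M1: "lumpable S T f M1 N1" and M2: "lumpable S T f M2 N2"
  shows "lumpable S T f (mmult S M1 M2) (mmult T N1 N2)"
  unfolding lumpable_def
proof (intro ballI)
  fix x b assume x: "x \<in> S" and b: "b \<in> T"
  have "(\<Sum>y\<in>{y \<in> S. f y = b}. mmult S M1 M2 x y) = (\<Sum>z\<in>S. M1 x z * (\<Sum>y\<in>{y \<in> S. f y = b}. M2 z y))"
    unfolding mmult_def by (subst sum.swap) (simp add: sum_distrib_left)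
  also have "\<dots> = (\<Sum>z\<in>S. M1 x z * N2 (f z) b)"
    using M2 b by (simp add: lumpable_def)
  also have "\<dots> = (\<Sum>c\<in>T. \<Sum>z\<in>{z \<in> S. f z = c}. M1 x z * N2 (f z) b)"
    by (rule sum.group[symmetric, OF S T f])
  also have "\<dots> = (\<Sum>c\<in>T. (\<Sum>z\<in>{z \<in> S. f z = c}. M1 x z) * N2 c b)"
    by (simp add: sum_distrib_right)
  also have "\<dots> = mmult T N1 N2 (f x) b"
    using M1 x by (simp add: lumpable_def mmult_def)
  finally show "(\<Sum>y\<in>{y \<in> S. f y = b}. mmult S M1 M2 x y) = mmult T N1 N2 (f x) b" .
qed

lemma lumpable_mpow:
  assumes "finite S" "finite T" "f ` S \<subseteq> T" "lumpable S T f Q G"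
  shows "lumpable S T f (mpow S Q k) (mpow T G k)"
  by (induction k) (auto intro!: lumpable_mid lumpable_mmult assms)

lemma lumpable_mexp:
  assumes S: "finite S" and T: "finite T" and f: "f ` S \<subseteq> T" and Q: "lumpable S T f Q G"
  shows "lumpable S T f (mexp S Q s) (mexp T G s)"
  unfolding lumpable_def
proof (intro ballI)
  fix x b assume x: "x \<in> S" and b: "b \<in> T"
  have "(\<Sum>y\<in>{y \<in> S. f y = b}. mexp S Q s x y)
      = (\<Sum>k. \<Sum>y\<in>{y \<in> S. f y = b}. s ^ k / fact k * mpow S Q k x y)"
    unfolding mexp_def by (rule suminf_sum[symmetric]) (rule summable_mexp_series[OF S], simp)
  also have "\<dots> = (\<Sum>k. s ^ k / fact k * mpow T G k (f x) b)"
    using lumpable_mpow[OF S T f Q] x b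
    by (intro suminf_cong) (simp add: lumpable_def sum_divide_distrib[symmetric] sum_distrib_left[symmetric])
  finally show "(\<Sum>y\<in>{y \<in> S. f y = b}. mexp S Q s x y) = mexp T G s (f x) b"
    by (simp add: mexp_def)
qed

lemma lumpable_ptrans:
  assumes "finite S" "finite T" "f ` S \<subseteq> T" "\<And>d. lumpable S T f (Q d) (G d)"
  shows "lumpable S T f (ptrans S Q D t u v) (ptrans T G D t u v)"
proof -
  have "lumpable S T f (foldr (\<lambda>d M. mmult S (mexp S (Q d) (elen D t d u v)) M) ds mid)
          (foldr (\<lambda>d M. mmult T (mexp T (G d) (elen D t d u v)) M) ds mid)" for ds
    by (induction ds) (auto intro!: lumpable_mid lumpable_mmult lumpable_mexp assms)
  then show ?thesis unfolding ptrans_def .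
qed

lemma sum_PiE_insert:
  assumes "a \<notin> I"
  shows "(\<Sum>x\<in>PiE (insert a I) B. F x) = (\<Sum>(y, h)\<in>B a \<times> PiE I B. F (h(a := y)))"
  unfolding PiE_insert_eq by (subst sum.reindex[OF inj_combinator[OF assms]]) (simp add: case_prod_beta)

lemma sum_PiE_path_lumped:
  fixes g :: "'s \<Rightarrow> real" and p :: "nat \<Rightarrow> 's \<Rightarrow> 's \<Rightarrow> real" and q :: "nat \<Rightarrow> 't \<Rightarrow> 't \<Rightarrow> real"
    and C :: "'t \<Rightarrow> 's set"
  assumes lump: "\<And>i y. i < K \<Longrightarrow> y \<in> C (c i) \<Longrightarrow> (\<Sum>z\<in>C (c (Suc i)). p i y z) = q i (c i) (c (Suc i))"
  shows "(\<Sum>x\<in>PiE {..K} (\<lambda>i. C (c i)). g (x 0) * (\<Prod>i<K. p i (x i) (x (Suc i))))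
       = (\<Sum>y\<in>C (c 0). g y) * (\<Prod>i<K. q i (c i) (c (Suc i)))"
  using lump
proof (induction K)
  case 0
  have "{..0::nat} = insert 0 {}" by auto
  then show ?case by (simp add: sum_PiE_insert sum.cartesian_product[symmetric])
next
  case (Suc K)
  let ?P = "PiE {..K} (\<lambda>i. C (c i))"
  let ?F = "\<lambda>x. g (x 0) * (\<Prod>i<K. p i (x i) (x (Suc i)))"
  have "{..Suc K} = insert (Suc K) {..K}" by auto
  then have "(\<Sum>x\<in>PiE {..Suc K} (\<lambda>i. C (c i)). g (x 0) * (\<Prod>i<Suc K. p i (x i) (x (Suc i))))
      = (\<Sum>(y, h)\<in>C (c (Suc K)) \<times> ?P. ?F h * p K (h K) y)"
    by (simp add: sum_PiE_insert) (auto simp: mult.assoc intro!: sum.cong prod.cong)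
  also have "\<dots> = (\<Sum>h\<in>?P. ?F h * (\<Sum>y\<in>C (c (Suc K)). p K (h K) y))"
    by (simp add: sum.cartesian_product[symmetric] sum.swap[of _ "C _"] sum_distrib_left)
  also have "\<dots> = (\<Sum>h\<in>?P. ?F h * q K (c K) (c (Suc K)))"
  proof (intro sum.cong refl)
    fix h assume "h \<in> ?P"
    then have "h K \<in> C (c K)" by auto
    then show "?F h * (\<Sum>y\<in>C (c (Suc K)). p K (h K) y) = ?F h * q K (c K) (c (Suc K))"
      by (simp add: Suc.prems)
  qed
  also have "\<dots> = (\<Sum>h\<in>?P. ?F h) * q K (c K) (c (Suc K))"
    by (simp add: sum_distrib_right)
  also have "\<dots> = (\<Sum>y\<in>C (c 0). g y) * (\<Prod>i<Suc K. q i (c i) (c (Suc i)))"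
    using Suc by (simp add: mult.assoc)
  finally show ?case .
qed

lemma (in finite_measure) measure_lumped_event:
  fixes X :: "nat \<Rightarrow> 'a \<Rightarrow> 's" and f :: "'s \<Rightarrow> 't"
  assumes S: "finite S" and val: "\<And>i \<omega>. i \<le> K \<Longrightarrow> \<omega> \<in> space M \<Longrightarrow> X i \<omega> \<in> S"
    and meas: "\<And>i x. i \<le> K \<Longrightarrow> {\<omega> \<in> space M. X i \<omega> = x} \<in> sets M"
  shows "measure M {\<omega> \<in> space M. \<forall>i\<le>K. f (X i \<omega>) = c i}
       = (\<Sum>x\<in>PiE {..K} (\<lambda>i. {y \<in> S. f y = c i}). measure M {\<omega> \<in> space M. \<forall>i\<le>K. X i \<omega> = x i})"
proof -
  let ?PE = "PiE {..K} (\<lambda>i. {y \<in> S. f y = c i})"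
  let ?E = "\<lambda>x. {\<omega> \<in> space M. \<forall>i\<le>K. X i \<omega> = x i}"
  have event: "{\<omega> \<in> space M. \<forall>i\<le>K. f (X i \<omega>) = c i} = (\<Union>x\<in>?PE. ?E x)"
  proof (intro equalityI subsetI)
    fix \<omega> assume \<omega>: "\<omega> \<in> {\<omega> \<in> space M. \<forall>i\<le>K. f (X i \<omega>) = c i}"
    then have "restrict (\<lambda>i. X i \<omega>) {..K} \<in> ?PE" using val by (simp add: restrict_PiE_iff)
    moreover have "\<omega> \<in> ?E (restrict (\<lambda>i. X i \<omega>) {..K})" using \<omega> by auto
    ultimately show "\<omega> \<in> (\<Union>x\<in>?PE. ?E x)" by blast
  qed (fastforce simp: PiE_iff)
  have sets_E: "?E x \<in> sets M" for x
  proof -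
    have "{\<omega> \<in> space M. \<forall>i\<in>{..K}. X i \<omega> = x i} \<in> sets M"
      using meas by (rule sets.sets_Collect_finite_All) auto
    then show ?thesis by (simp only: Ball_def atMost_iff)
  qed
  have disj: "disjoint_family_on ?E ?PE"
    unfolding disjoint_family_on_def
  proof (intro ballI impI)
    fix x y assume x: "x \<in> ?PE" and y: "y \<in> ?PE" and "x \<noteq> y"
    then obtain i where "i \<le> K" "x i \<noteq> y i" using PiE_ext[OF x y] by blast
    then show "?E x \<inter> ?E y = {}" by auto
  qed
  have fin: "finite ?PE" using S by (intro finite_PiE) auto
  show ?thesis
    unfolding event by (rule finite_measure_finite_Union[OF fin _ disj]) (use sets_E in blast)
qed

lemma markov_fdd_lumpable:
  fixes X :: "real \<Rightarrow> 'w \<Rightarrow> 's" and f :: "'s \<Rightarrow> 't"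
  assumes S: "finite S" and T: "finite T" and f: "f ` S \<subseteq> T"
    and Q: "\<And>d. lumpable S T f (Q d) (G d)"
    and Pr: "prob_space Pr"
    and Xval: "\<forall>s\<in>{T0..0}. \<forall>\<omega>\<in>space Pr. X s \<omega> \<in> S"
    and Xmeas: "\<forall>s\<in>{T0..0}. \<forall>x. {\<omega> \<in> space Pr. X s \<omega> = x} \<in> sets Pr"
    and X: "markov_fdd Pr S Q D t T0 X"
  shows "markov_fdd Pr T G D t T0 (\<lambda>s \<omega>. f (X s \<omega>))"
  unfolding markov_fdd_def
proof (intro allI impI)
  interpret finite_measure Pr using Pr by (rule prob_space.finite_measure)
  fix K and s :: "nat \<Rightarrow> real" and c :: "nat \<Rightarrow> 't"
  assume H: "T0 \<le> s 0 \<and> s K \<le> 0 \<and> (\<forall>i<K. s i \<le> s (Suc i)) \<and> (\<forall>i\<le>K. c i \<in> T)"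
  let ?C = "\<lambda>b. {y \<in> S. f y = b}"
  let ?P = "\<lambda>x. measure Pr {\<omega> \<in> space Pr. X (s 0) \<omega> = x}"
  have times: "s i \<in> {T0..0}" if "i \<le> K" for i
  proof -
    have "s 0 \<le> s i" "s i \<le> s K"
      by (rule lift_Suc_mono_le_ivl[of "{..<K}"]; use H that in auto)+
    then show ?thesis using H by simp
  qed
  have initial: "measure Pr {\<omega> \<in> space Pr. f (X (s 0) \<omega>) = c 0} = (\<Sum>y\<in>?C (c 0). ?P y)"
  proof -
    have "measure Pr {\<omega> \<in> space Pr. \<forall>i\<le>0. f (X (s 0) \<omega>) = c i}
        = (\<Sum>x\<in>PiE {..0} (\<lambda>i. ?C (c i)). measure Pr {\<omega> \<in> space Pr. \<forall>i\<le>0. X (s 0) \<omega> = x i})"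
      by (rule measure_lumped_event[OF S]) (use Xval Xmeas times[of 0] in auto)
    also have "\<dots> = (\<Sum>x\<in>PiE {..0} (\<lambda>i. ?C (c i)). ?P (x 0) * (\<Prod>i<0. mid (x i) (x (Suc i))))"
      by simp
    also have "\<dots> = (\<Sum>y\<in>?C (c 0). ?P y) * (\<Prod>i<0. mid (c i) (c (Suc i)))"
      by (rule sum_PiE_path_lumped) simp
    finally show ?thesis by simp
  qed
  have "measure Pr {\<omega> \<in> space Pr. \<forall>i\<le>K. f (X (s i) \<omega>) = c i}
      = (\<Sum>x\<in>PiE {..K} (\<lambda>i. ?C (c i)). measure Pr {\<omega> \<in> space Pr. \<forall>i\<le>K. X (s i) \<omega> = x i})"
    by (rule measure_lumped_event[OF S]) (use Xval Xmeas times in auto)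
  also have "\<dots> = (\<Sum>x\<in>PiE {..K} (\<lambda>i. ?C (c i)).
                    ?P (x 0) * (\<Prod>i<K. ptrans S Q D t (s i) (s (Suc i)) (x i) (x (Suc i))))"
    using H by (intro sum.cong refl X[unfolded markov_fdd_def, rule_format]) (auto simp: PiE_iff)
  also have "\<dots> = (\<Sum>y\<in>?C (c 0). ?P y) * (\<Prod>i<K. ptrans T G D t (s i) (s (Suc i)) (c i) (c (Suc i)))"
  proof (rule sum_PiE_path_lumped)
    fix i y assume "i < K" "y \<in> ?C (c i)"
    then show "(\<Sum>z\<in>?C (c (Suc i)). ptrans S Q D t (s i) (s (Suc i)) y z)
        = ptrans T G D t (s i) (s (Suc i)) (c i) (c (Suc i))"
      using lumpable_ptrans[OF S T f Q] H unfolding lumpable_def by auto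
  qed
  finally show "measure Pr {\<omega> \<in> space Pr. \<forall>i\<le>K. f (X (s i) \<omega>) = c i}
      = measure Pr {\<omega> \<in> space Pr. f (X (s 0) \<omega>) = c 0}
        * (\<Prod>i<K. ptrans T G D t (s i) (s (Suc i)) (c i) (c (Suc i)))"
    unfolding initial .
qed

section \<open>Detailed balance\<close>

definition detailed_balance :: "'s set \<Rightarrow> ('s \<Rightarrow> real) \<Rightarrow> ('s \<Rightarrow> 's \<Rightarrow> real) \<Rightarrow> bool" where
  "detailed_balance S \<gamma> Q \<longleftrightarrow> (\<forall>m\<in>S. \<forall>m'\<in>S. \<gamma> m * Q m m' = \<gamma> m' * Q m' m)"

lemma detailed_balance_mpow:
  assumes S: "finite S" and G: "detailed_balance S \<gamma> G"
  shows "detailed_balance S \<gamma> (mpow S G k)"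
  unfolding detailed_balance_def
proof (induction k)
  case 0 then show ?case by (auto simp: mid_def)
next
  case (Suc k)
  show ?case
  proof (intro ballI)
    fix m m' assume m: "m \<in> S" and m': "m' \<in> S"
    have "\<gamma> m * mpow S G (Suc k) m m' = (\<Sum>z\<in>S. (\<gamma> m * G m z) * mpow S G k z m')"
      using mpow_Suc_left[OF S m m'] by (simp add: mmult_def sum_distrib_left mult.assoc)
    also have "\<dots> = (\<Sum>z\<in>S. G z m * (\<gamma> z * mpow S G k z m'))"
      using G m by (intro sum.cong refl) (auto simp: detailed_balance_def mult_ac)
    also have "\<dots> = (\<Sum>z\<in>S. G z m * (\<gamma> m' * mpow S G k m' z))"
      using Suc m' by (intro sum.cong refl) auto
    also have "\<dots> = \<gamma> m' * mpow S G (Suc k) m' m"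
      by (simp add: mmult_def sum_distrib_left mult_ac)
    finally show "\<gamma> m * mpow S G (Suc k) m m' = \<gamma> m' * mpow S G (Suc k) m' m" .
  qed
qed

lemma detailed_balance_mexp:
  assumes S: "finite S" and G: "detailed_balance S \<gamma> G"
  shows "detailed_balance S \<gamma> (mexp S G s)"
  unfolding detailed_balance_def
proof (intro ballI)
  fix m m' assume m: "m \<in> S" and m': "m' \<in> S"
  have "\<gamma> m * mexp S G s m m' = (\<Sum>k. s ^ k / fact k * (\<gamma> m * mpow S G k m m'))"
    unfolding mexp_def using summable_mexp_series[OF S m']
    by (subst suminf_mult[symmetric]) (auto simp: mult_ac)
  also have "\<dots> = (\<Sum>k. s ^ k / fact k * (\<gamma> m' * mpow S G k m' m))"
    using detailed_balance_mpow[OF S G] m m' by (simp add: detailed_balance_def)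
  also have "\<dots> = \<gamma> m' * mexp S G s m' m"
    unfolding mexp_def using summable_mexp_series[OF S m]
    by (subst suminf_mult[symmetric]) (auto simp: mult_ac)
  finally show "\<gamma> m * mexp S G s m m' = \<gamma> m' * mexp S G s m' m" .
qed

lemma sum_atLeastAtMost_neighbours:
  fixes g :: "nat \<Rightarrow> real"
  assumes j: "j \<le> n" and supp: "\<And>m. m \<le> n \<Longrightarrow> m \<noteq> j \<Longrightarrow> m \<noteq> Suc j \<Longrightarrow> Suc m \<noteq> j \<Longrightarrow> g m = 0"
  shows "(\<Sum>m\<in>{0..n}. g m) = (if 0 < j then g (j - 1) else 0) + g j + (if j < n then g (Suc j) else 0)"
proof -
  have "(\<Sum>m\<in>{0..n}. g m) = (\<Sum>m\<in>{0..n}. (if m = j - 1 \<and> 0 < j then g m else 0)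
      + (if m = j then g m else 0) + (if m = Suc j then g m else 0))"
    using supp by (intro sum.cong refl) auto
  also have "\<dots> = (if 0 < j then g (j - 1) else 0) + g j + (if j < n then g (Suc j) else 0)"
    using j by (simp add: sum.distrib sum.delta' sum.If_cases)
  finally show ?thesis .
qed

text \<open>For a birth--death generator, the balance equation of column \<open>j\<close> minus \<open>\<gamma> j\<close> times
  row \<open>j\<close> says that the net flux across the cut \<open>{j, j+1}\<close> equals that across \<open>{j-1, j}\<close>;
  the latter vanishes at \<open>j = 0\<close>.\<close>

lemma tridiagonal_stationary_detailed_balance:
  fixes Q :: "nat \<Rightarrow> nat \<Rightarrow> real"
  assumes tri: "\<And>m m'. m' \<noteq> m \<Longrightarrow> m' \<noteq> Suc m \<Longrightarrow> Suc m' \<noteq> m \<Longrightarrow> Q m m' = 0"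
    and rows: "\<And>m. m \<le> n \<Longrightarrow> (\<Sum>m'\<in>{0..n}. Q m m') = 0"
    and stat: "\<And>m'. m' \<le> n \<Longrightarrow> (\<Sum>m\<in>{0..n}. \<gamma> m * Q m m') = 0"
  shows "detailed_balance {0..n} \<gamma> Q"
proof -
  have flux: "\<gamma> j * Q j (Suc j) = \<gamma> (Suc j) * Q (Suc j) j" if "j < n" for j
    using that
  proof (induction j)
    case 0
    have "(\<Sum>m\<in>{0..n}. \<gamma> m * Q m 0) - \<gamma> 0 * (\<Sum>m'\<in>{0..n}. Q 0 m') = 0"
      using rows stat by simp
    with 0 show ?case
      by (subst (asm) (1 2) sum_atLeastAtMost_neighbours[of 0]) (auto simp: tri algebra_simps)
  next
    case (Suc j)
    have "(\<Sum>m\<in>{0..n}. \<gamma> m * Q m (Suc j)) - \<gamma> (Suc j) * (\<Sum>m'\<in>{0..n}. Q (Suc j) m') = 0"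
      using rows stat Suc.prems by simp
    with Suc show ?case
      by (subst (asm) (1 2) sum_atLeastAtMost_neighbours[of "Suc j"]) (auto simp: tri algebra_simps)
  qed
  show ?thesis
    unfolding detailed_balance_def
  proof (intro ballI)
    fix m m' assume "m \<in> {0..n}" "m' \<in> {0..n}"
    then show "\<gamma> m * Q m m' = \<gamma> m' * Q m' m"
      using flux[of m] flux[of m'] tri[of m' m] tri[of m m']
      by (cases "m' = Suc m \<or> m = Suc m' \<or> m = m'") auto
  qed
qed

lemma counts_add_mset:
  "na (add_mset h x) = na x + (if is_a h then 1 else 0)"
  "nb (add_mset h x) = nb x + (if is_b h then 1 else 0)"
  "nc (add_mset h x) = nc x + (if is_c h then 1 else 0)"
  by (auto simp: na_def nb_def nc_def)

lemma counts_remove: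
  assumes "h \<in># x"
  shows "na x = na (x - {#h#}) + (if is_a h then 1 else 0)"
    and "nb x = nb (x - {#h#}) + (if is_b h then 1 else 0)"
    and "nc x = nc (x - {#h#}) + (if is_c h then 1 else 0)"
  using counts_add_mset[of h "x - {#h#}"] by (simp_all add: insert_DiffM[OF assms])

lemma count_eq_0_if_nc_changes:
  assumes "nc (add_mset h' (x - {#h#})) \<noteq> nc x" "is_c h' = is_c h"
  shows "count x h = 0"
  using counts_remove(3)[of h x] counts_add_mset(3)[of h' "x - {#h#}"] assms
  by (auto simp: not_in_iff[symmetric])

lemma size_eq_counts: "size x = na x + nb x + nc x"
proof (induction x)
  case empty then show ?case by (simp add: na_def nb_def nc_def)
next
  case (add h x) then show ?case by (cases h) (auto simp: counts_add_mset)
qed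

lemma finite_haps: "finite A \<Longrightarrow> finite (haps A)"
proof -
  assume "finite A"
  moreover have "{HC i j | i j. i \<in> A \<and> j \<in> A} = (\<lambda>(i,j). HC i j) ` (A \<times> A)" by auto
  ultimately show ?thesis by (simp add: haps_def)
qed

lemma finite_confN: "finite A \<Longrightarrow> finite (confN A n)"
proof -
  assume "finite A"
  moreover have "confN A n \<subseteq> (\<Union>N\<in>{..2*n}. multisets_of_size (haps A) N)"
    by (auto simp: confN_def multisets_of_size_def size_eq_counts)
  ultimately show ?thesis
    by (meson finite_haps finite_UN_I finite_atMost finite_multisets_of_size finite_subset)
qed

lemma confN_D:
  assumes "x \<in> confN A n"
  shows "set_mset x \<subseteq> haps A" and "nc x \<le> n" and "real (na x) * real (nb x) = real ((n - nc x)^2)"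
  using assms by (auto simp: confN_def power2_eq_square)

lemma sum_count_eq_size_filter:
  "finite H \<Longrightarrow> (\<Sum>h\<in>H. real (count x h)) = real (size (filter_mset (\<lambda>h. h \<in> H) x))"
proof (induction x)
  case empty then show ?case by simp
next
  case (add a x)
  have "(\<Sum>h\<in>H. real (count (add_mset a x) h)) = (\<Sum>h\<in>H. real (count x h) + (if a = h then 1 else 0))"
    by (intro sum.cong) auto
  also have "\<dots> = (\<Sum>h\<in>H. real (count x h)) + (if a \<in> H then 1 else 0)"
    using add.prems by (simp add: sum.distrib)
  finally show ?case using add by auto
qed

lemma sum_count_haps:
  assumes "finite A" "set_mset x \<subseteq> haps A"
  shows "(\<Sum>i\<in>A. real (count x (HA i))) = real (na x)"
    and "(\<Sum>i\<in>A. real (count x (HB i))) = real (nb x)"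
    and "(\<Sum>i\<in>A. \<Sum>j\<in>A. real (count x (HC i j))) = real (nc x)"
proof -
  have count_image: "(\<Sum>h\<in>g ` B. real (count x h)) = real (size (filter_mset p x))"
    if "finite B" "\<And>h. h \<in># x \<Longrightarrow> h \<in> g ` B \<longleftrightarrow> p h" for g :: "'b \<Rightarrow> 'a hap" and B p
    using that by (simp add: sum_count_eq_size_filter cong: filter_mset_cong)
  have "(\<Sum>i\<in>A. real (count x (HA i))) = (\<Sum>h\<in>HA ` A. real (count x h))"
    by (simp add: sum.reindex inj_on_def)
  also have "\<dots> = real (na x)"
    unfolding na_def using assms by (intro count_image) (auto simp: haps_def elim: is_a.elims)
  finally show "(\<Sum>i\<in>A. real (count x (HA i))) = real (na x)" .
  have "(\<Sum>i\<in>A. real (count x (HB i))) = (\<Sum>h\<in>HB ` A. real (count x h))"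
    by (simp add: sum.reindex inj_on_def)
  also have "\<dots> = real (nb x)"
    unfolding nb_def using assms by (intro count_image) (auto simp: haps_def elim: is_b.elims)
  finally show "(\<Sum>i\<in>A. real (count x (HB i))) = real (nb x)" .
  have "(\<Sum>i\<in>A. \<Sum>j\<in>A. real (count x (HC i j))) = (\<Sum>h\<in>(\<lambda>(i,j). HC i j) ` (A\<times>A). real (count x h))"
    by (subst sum.reindex) (auto simp: inj_on_def sum.cartesian_product intro!: sum.cong)
  also have "\<dots> = real (nc x)"
    unfolding nc_def using assms by (intro count_image) (auto simp: haps_def elim: is_c.elims)
  finally show "(\<Sum>i\<in>A. \<Sum>j\<in>A. real (count x (HC i j))) = real (nc x)" .
qed

section \<open>Lumping \<open>Lam\<close> onto \<open>Gam\<close>\<close>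

definition rate_a :: "'a set \<Rightarrow> ('a \<Rightarrow> 'a \<Rightarrow> real) \<Rightarrow> real \<Rightarrow> real
    \<Rightarrow> 'a hap multiset \<Rightarrow> 'a hap multiset \<Rightarrow> real" where
  "rate_a A P \<theta> \<eta> nn mm =
     (\<Sum>i\<in>A. \<Sum>j\<in>A. if mm = nn - {#HA i#} + {#HA j#} then
        1/\<eta> * real (count nn (HA i)) *
          (1/2 * real (count nn (HA j)) + (\<Sum>k\<in>A. real (count nn (HC j k))))
        + \<theta>/2 * P i j * real (count nn (HA i)) else 0)"

definition rate_b :: "'a set \<Rightarrow> ('a \<Rightarrow> 'a \<Rightarrow> real) \<Rightarrow> real \<Rightarrow> real
    \<Rightarrow> 'a hap multiset \<Rightarrow> 'a hap multiset \<Rightarrow> real" where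
  "rate_b A P \<theta> \<eta> nn mm =
     (\<Sum>i\<in>A. \<Sum>j\<in>A. if mm = nn - {#HB i#} + {#HB j#} then
        1/\<eta> * real (count nn (HB i)) *
          (1/2 * real (count nn (HB j)) + (\<Sum>k\<in>A. real (count nn (HC k j))))
        + \<theta>/2 * P i j * real (count nn (HB i)) else 0)"

definition rate_c :: "'a set \<Rightarrow> ('a \<Rightarrow> 'a \<Rightarrow> real) \<Rightarrow> real \<Rightarrow> real
    \<Rightarrow> 'a hap multiset \<Rightarrow> 'a hap multiset \<Rightarrow> real" where
  "rate_c A P \<theta> \<eta> nn mm =
     (\<Sum>i\<in>A. \<Sum>j\<in>A. \<Sum>k\<in>A. \<Sum>l\<in>A. if mm = nn - {#HC i j#} + {#HC k l#} then
        1/(2*\<eta>) * real (count nn (HC i j)) * real (count nn (HC k l))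
        + \<theta>/2 * ((if i = k then P j l else 0) + (if j = l then P i k else 0))
            * real (count nn (HC i j)) else 0)"

definition rate_recomb :: "'a set \<Rightarrow> real \<Rightarrow> 'a hap multiset \<Rightarrow> 'a hap multiset \<Rightarrow> real" where
  "rate_recomb A \<rho> nn mm =
     (\<Sum>i\<in>A. \<Sum>j\<in>A. if mm = nn - {#HC i j#} + {#HA i#} + {#HB j#} then
        \<rho>/2 * real (count nn (HC i j)) else 0)"

definition rate_join :: "'a set \<Rightarrow> real \<Rightarrow> 'a hap multiset \<Rightarrow> 'a hap multiset \<Rightarrow> real" where
  "rate_join A \<eta> nn mm =
     (\<Sum>i\<in>A. \<Sum>j\<in>A. if mm = nn - {#HA i#} - {#HB j#} + {#HC i j#} then
        1/\<eta> * real (count nn (HA i)) * real (count nn (HB j)) else 0)"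

lemma lam_off_eq_rates:
  "lam_off A P \<theta> \<rho> \<eta> nn mm = rate_a A P \<theta> \<eta> nn mm + rate_b A P \<theta> \<eta> nn mm
     + rate_c A P \<theta> \<eta> nn mm + rate_recomb A \<rho> nn mm + rate_join A \<eta> nn mm"
  unfolding lam_off_def rate_a_def rate_b_def rate_c_def rate_recomb_def rate_join_def by simp

text \<open>Each summand of the first three rates carries the factor \<open>count nn h\<close> of the
  replaced haplotype \<open>h\<close>, so it vanishes unless \<open>h \<in># nn\<close>, and then \<open>nc\<close> is preserved.\<close>

lemma rate_a_eq_0: "nc y \<noteq> nc x \<Longrightarrow> rate_a A P \<theta> \<eta> x y = 0"
  unfolding rate_a_def
  by (intro sum.neutral ballI) (auto dest!: count_eq_0_if_nc_changes)

lemma rate_b_eq_0: "nc y \<noteq> nc x \<Longrightarrow> rate_b A P \<theta> \<eta> x y = 0"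
  unfolding rate_b_def
  by (intro sum.neutral ballI) (auto dest!: count_eq_0_if_nc_changes)

lemma rate_c_eq_0: "nc y \<noteq> nc x \<Longrightarrow> rate_c A P \<theta> \<eta> x y = 0"
  unfolding rate_c_def
  by (intro sum.neutral ballI) (auto dest!: count_eq_0_if_nc_changes)

lemma sum_targets_if_eq:
  fixes r :: "'i \<Rightarrow> 'i \<Rightarrow> real"
  assumes "finite Y" "finite A"
  shows "(\<Sum>y\<in>Y. \<Sum>i\<in>A. \<Sum>j\<in>A. if y = g i j then r i j else 0)
       = (\<Sum>i\<in>A. \<Sum>j\<in>A. if g i j \<in> Y then r i j else 0)"
proof -
  have "(\<Sum>y\<in>Y. \<Sum>i\<in>A. \<Sum>j\<in>A. if y = g i j then r i j else 0)
      = (\<Sum>i\<in>A. \<Sum>j\<in>A. \<Sum>y\<in>Y. if y = g i j then r i j else 0)"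
    by (subst sum.swap) (intro sum.cong refl sum.swap)
  then show ?thesis using assms by (simp add: sum.delta)
qed

lemma recomb_target:
  assumes x: "x \<in> confN A n" and ij: "i \<in> A" "j \<in> A" and h: "HC i j \<in># x"
  defines "y \<equiv> x - {#HC i j#} + {#HA i#} + {#HB j#}"
  shows "y \<in> confN A n" and "nc y + 1 = nc x"
proof -
  from x obtain k where k: "set_mset x \<subseteq> haps A" "k \<le> n" "na x = k" "nb x = k" "nc x = n - k"
    unfolding confN_def by auto
  have y: "y = add_mset (HB j) (add_mset (HA i) (x - {#HC i j#}))"
    unfolding y_def by simp
  have counts: "na y = k + 1" "nb y = k + 1" "nc y + 1 = nc x"
    using counts_remove[OF h] k unfolding y by (simp_all add: counts_add_mset)
  then have "k + 1 \<le> n" "nc y = n - (k + 1)" using k by auto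
  moreover have "set_mset y \<subseteq> haps A"
    using k(1) ij unfolding y by (auto simp: haps_def dest: in_diffD)
  ultimately show "y \<in> confN A n" using counts unfolding confN_def by blast
  show "nc y + 1 = nc x" by (fact counts(3))
qed

lemma join_target:
  assumes x: "x \<in> confN A n" and ij: "i \<in> A" "j \<in> A" and h: "HA i \<in># x" "HB j \<in># x"
  defines "y \<equiv> x - {#HA i#} - {#HB j#} + {#HC i j#}"
  shows "y \<in> confN A n" and "nc y = nc x + 1"
proof -
  from x obtain k where k: "set_mset x \<subseteq> haps A" "k \<le> n" "na x = k" "nb x = k" "nc x = n - k"
    unfolding confN_def by auto
  have hB: "HB j \<in># x - {#HA i#}" using h by (simp add: in_diff_count)
  have y: "y = add_mset (HC i j) (x - {#HA i#} - {#HB j#})"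
    unfolding y_def by simp
  let ?z = "x - {#HA i#} - {#HB j#}"
  have "na x = na ?z + 1" "nb x = nb ?z + 1" "nc x = nc ?z"
    using counts_remove[OF h(1)] counts_remove[OF hB] by auto
  then have counts: "na y + 1 = k" "nb y + 1 = k" "nc y = nc x + 1"
    using k unfolding y by (simp_all add: counts_add_mset)
  moreover have "set_mset y \<subseteq> haps A"
    using k(1) ij unfolding y by (auto simp: haps_def dest: in_diffD)
  ultimately show "y \<in> confN A n"
    using k unfolding confN_def by (intro CollectI conjI exI[of _ "k - 1"]) auto
  show "nc y = nc x + 1" by (fact counts(3))
qed

lemma sum_rate_recomb_fibre:
  assumes A: "finite A" and x: "x \<in> confN A n"
  shows "(\<Sum>y\<in>{y \<in> confN A n. nc y = b}. rate_recomb A \<rho> x y)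
       = (if b + 1 = nc x then \<rho>/2 * real (nc x) else 0)"
proof -
  have "(\<Sum>y\<in>{y \<in> confN A n. nc y = b}. rate_recomb A \<rho> x y)
      = (\<Sum>i\<in>A. \<Sum>j\<in>A. if x - {#HC i j#} + {#HA i#} + {#HB j#} \<in> {y \<in> confN A n. nc y = b}
          then \<rho>/2 * real (count x (HC i j)) else 0)"
    unfolding rate_recomb_def using finite_confN[OF A] A by (intro sum_targets_if_eq) auto
  also have "\<dots> = (\<Sum>i\<in>A. \<Sum>j\<in>A. if b + 1 = nc x then \<rho>/2 * real (count x (HC i j)) else 0)"
    using recomb_target[OF x] by (intro sum.cong refl) (force simp: not_in_iff[symmetric])
  also have "\<dots> = (if b + 1 = nc x then \<rho>/2 * (\<Sum>i\<in>A. \<Sum>j\<in>A. real (count x (HC i j))) else 0)"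
    by (simp add: sum_distrib_left)
  also have "\<dots> = (if b + 1 = nc x then \<rho>/2 * real (nc x) else 0)"
    using sum_count_haps(3)[OF A confN_D(1)[OF x]] by simp
  finally show ?thesis .
qed

lemma sum_rate_join_fibre:
  assumes A: "finite A" and x: "x \<in> confN A n"
  shows "(\<Sum>y\<in>{y \<in> confN A n. nc y = b}. rate_join A \<eta> x y)
       = (if b = nc x + 1 then real (na x) * real (nb x) / \<eta> else 0)"
proof -
  have "(\<Sum>y\<in>{y \<in> confN A n. nc y = b}. rate_join A \<eta> x y)
      = (\<Sum>i\<in>A. \<Sum>j\<in>A. if x - {#HA i#} - {#HB j#} + {#HC i j#} \<in> {y \<in> confN A n. nc y = b}
          then 1/\<eta> * real (count x (HA i)) * real (count x (HB j)) else 0)"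
    unfolding rate_join_def using finite_confN[OF A] A by (intro sum_targets_if_eq) auto
  also have "\<dots> = (\<Sum>i\<in>A. \<Sum>j\<in>A. if b = nc x + 1
                    then 1/\<eta> * real (count x (HA i)) * real (count x (HB j)) else 0)"
    using join_target[OF x] by (intro sum.cong refl) (force simp: not_in_iff[symmetric])
  also have "\<dots> = (if b = nc x + 1 then
        (\<Sum>i\<in>A. real (count x (HA i))) * (\<Sum>j\<in>A. real (count x (HB j))) / \<eta> else 0)"
    by (simp add: sum_product sum_divide_distrib)
  also have "\<dots> = (if b = nc x + 1 then real (na x) * real (nb x) / \<eta> else 0)"
    using sum_count_haps(1,2)[OF A confN_D(1)[OF x]] by simp
  finally show ?thesis .
qed

lemma Gam_eq_0: "m' \<noteq> m \<Longrightarrow> m' \<noteq> Suc m \<Longrightarrow> Suc m' \<noteq> m \<Longrightarrow> Gam \<rho> n \<eta> m m' = 0"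
  by (auto simp: Gam_def)

lemma Gam_off_diagonal:
  "b \<noteq> m \<Longrightarrow> Gam \<rho> n \<eta> m b
     = (if b + 1 = m then \<rho>/2 * real m else 0) + (if b = m + 1 then real ((n - m)^2) / \<eta> else 0)"
  by (auto simp: Gam_def)

lemma Gam_row_sum: "m \<le> n \<Longrightarrow> (\<Sum>m'\<in>{0..n}. Gam \<rho> n \<eta> m m') = 0"
  by (subst sum_atLeastAtMost_neighbours[of m]) (auto simp: Gam_eq_0 Gam_def)

lemma Gam_detailed_balance:
  assumes "\<And>m'. m' \<le> n \<Longrightarrow> (\<Sum>m\<in>{0..n}. \<gamma> m * Gam \<rho> n \<eta> m m') = 0"
  shows "detailed_balance {0..n} \<gamma> (Gam \<rho> n \<eta>)"
  using assms by (intro tridiagonal_stationary_detailed_balance Gam_eq_0 Gam_row_sum)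

lemma sum_lam_off_fibre:
  assumes A: "finite A" and x: "x \<in> confN A n" and b: "b \<noteq> nc x"
  shows "(\<Sum>y\<in>{y \<in> confN A n. nc y = b}. lam_off A P \<theta> \<rho> \<eta> x y) = Gam \<rho> n \<eta> (nc x) b"
proof -
  have "(\<Sum>y\<in>{y \<in> confN A n. nc y = b}. lam_off A P \<theta> \<rho> \<eta> x y)
      = (\<Sum>y\<in>{y \<in> confN A n. nc y = b}. rate_recomb A \<rho> x y + rate_join A \<eta> x y)"
    using b by (intro sum.cong refl) (auto simp: lam_off_eq_rates rate_a_eq_0 rate_b_eq_0 rate_c_eq_0)
  also have "\<dots> = (if b + 1 = nc x then \<rho>/2 * real (nc x) else 0)
                + (if b = nc x + 1 then real (na x) * real (nb x) / \<eta> else 0)"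
    by (simp add: sum.distrib sum_rate_recomb_fibre[OF A x] sum_rate_join_fibre[OF A x])
  also have "\<dots> = Gam \<rho> n \<eta> (nc x) b"
    using b confN_D(3)[OF x] by (simp add: Gam_off_diagonal)
  finally show ?thesis .
qed

lemma Lam_lumpable:
  assumes A: "finite A"
  shows "lumpable (confN A n) {0..n} nc (Lam A P \<theta> \<rho> n \<eta>) (Gam \<rho> n \<eta>)"
  unfolding lumpable_def
proof (intro ballI)
  fix x b assume x: "x \<in> confN A n" and b: "b \<in> {0..n}"
  let ?S = "confN A n" and ?m = "nc x" and ?f = "lam_off A P \<theta> \<rho> \<eta> x"
  let ?fibre = "\<lambda>c. {y \<in> ?S. nc y = c}"
  show "(\<Sum>y\<in>?fibre b. Lam A P \<theta> \<rho> n \<eta> x y) = Gam \<rho> n \<eta> ?m b"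
  proof (cases "b = ?m")
    case False
    then have "(\<Sum>y\<in>?fibre b. Lam A P \<theta> \<rho> n \<eta> x y) = (\<Sum>y\<in>?fibre b. ?f y)"
      by (intro sum.cong refl) (auto simp: Lam_def)
    then show ?thesis using sum_lam_off_fibre[OF A x False] by simp
  next
    case True
    have fin: "finite ?S" by (rule finite_confN[OF A])
    have x_fibre: "x \<in> ?fibre b" using x True by simp
    have "(\<Sum>y\<in>?S - {x}. ?f y) = (\<Sum>y\<in>(?fibre b - {x}) \<union> {y \<in> ?S. nc y \<noteq> ?m}. ?f y)"
      using True by (intro sum.cong) auto
    also have "\<dots> = (\<Sum>y\<in>?fibre b - {x}. ?f y) + (\<Sum>y\<in>{y \<in> ?S. nc y \<noteq> ?m}. ?f y)"
      using fin True by (intro sum.union_disjoint) auto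
    finally have split: "(\<Sum>y\<in>?S - {x}. ?f y)
        = (\<Sum>y\<in>?fibre b - {x}. ?f y) + (\<Sum>y\<in>{y \<in> ?S. nc y \<noteq> ?m}. ?f y)" .
    have "(\<Sum>y\<in>{y \<in> ?S. nc y \<noteq> ?m}. ?f y) = (\<Sum>c\<in>{0..n}-{?m}. \<Sum>y\<in>?fibre c. ?f y)"
      using fin by (subst sum.group[symmetric, of _ "{0..n}-{?m}" nc]) (auto simp: confN_D intro!: sum.cong)
    also have "\<dots> = (\<Sum>c\<in>{0..n}-{?m}. Gam \<rho> n \<eta> ?m c)"
      using sum_lam_off_fibre[OF A x] by (intro sum.cong refl) auto
    also have "\<dots> = - Gam \<rho> n \<eta> ?m ?m"
      using Gam_row_sum[of ?m n \<rho> \<eta>] sum.remove[of "{0..n}" ?m "Gam \<rho> n \<eta> ?m"] confN_D(2)[OF x]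
      by simp
    finally have off_fibre: "(\<Sum>y\<in>{y \<in> ?S. nc y \<noteq> ?m}. ?f y) = - Gam \<rho> n \<eta> ?m ?m" .
    have "(\<Sum>y\<in>?fibre b - {x}. Lam A P \<theta> \<rho> n \<eta> x y) = (\<Sum>y\<in>?fibre b - {x}. ?f y)"
      by (intro sum.cong) (auto simp: Lam_def)
    then have "(\<Sum>y\<in>?fibre b. Lam A P \<theta> \<rho> n \<eta> x y)
        = Lam A P \<theta> \<rho> n \<eta> x x + (\<Sum>y\<in>?fibre b - {x}. ?f y)"
      using fin x_fibre by (simp add: sum.remove)
    also have "\<dots> = - (\<Sum>y\<in>{y \<in> ?S. nc y \<noteq> ?m}. ?f y)"
      unfolding Lam_def using split by simp
    finally show ?thesis using off_fibre True by simp
  qed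
qed

theorem mainTheorem2:
  fixes A :: "'a set" and P :: "'a \<Rightarrow> 'a \<Rightarrow> real"
    and \<theta> \<rho> :: real and n D :: nat
    and t \<eta> :: "int \<Rightarrow> real"
    and Pr :: "'w measure" and T0 :: real
    and M :: "real \<Rightarrow> 'w \<Rightarrow> 'a hap multiset"
  assumes A: "finite A" "A \<noteq> {}"
    and P: "\<forall>i\<in>A. \<forall>j\<in>A. P i j \<ge> 0" "\<forall>i\<in>A. (\<Sum>j\<in>A. P i j) = 1"
    and \<theta>: "\<theta> \<ge> 0" and \<rho>: "\<rho> \<ge> 0" and n: "n \<ge> 1"
    and D: "D \<ge> 1"
    and t: "t 0 = 0" "\<forall>d. - int D + 1 \<le> d \<and> d < 0 \<longrightarrow> t d < t (d + 1)"
    and \<eta>: "\<forall>d. - int D \<le> d \<and> d \<le> -1 \<longrightarrow> \<eta> d > 0"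
    and Pr: "prob_space Pr" and T0: "T0 \<le> 0"
    and Mval: "\<forall>s\<in>{T0..0}. \<forall>\<omega>\<in>space Pr. M s \<omega> \<in> confN A n"
    and Mmeas: "\<forall>s\<in>{T0..0}. \<forall>x. {\<omega> \<in> space Pr. M s \<omega> = x} \<in> sets Pr"
    and Mmarkov: "markov_fdd Pr (confN A n) (\<lambda>d. Lam A P \<theta> \<rho> n (\<eta> d)) D t T0 M"
  shows "markov_fdd Pr {0..n} (\<lambda>d. Gam \<rho> n (\<eta> d)) D t T0 (\<lambda>s \<omega>. nc (M s \<omega>))
   \<and> (\<rho> > 0 \<longrightarrow>
       (\<forall>d. - int D \<le> d \<and> d \<le> -1 \<longrightarrow>
         (\<forall>\<gamma> :: nat \<Rightarrow> real.
            (\<forall>m\<in>{0..n}. \<gamma> m \<ge> 0) \<and> (\<Sum>m\<in>{0..n}. \<gamma> m) = 1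
            \<and> (\<forall>m'\<in>{0..n}. (\<Sum>m\<in>{0..n}. \<gamma> m * Gam \<rho> n (\<eta> d) m m') = 0)
            \<longrightarrow> (\<forall>m\<in>{0..n}. \<forall>m'\<in>{0..n}. \<forall>s\<ge>0.
                  \<gamma> m * mexp {0..n} (Gam \<rho> n (\<eta> d)) s m m'
                  = \<gamma> m' * mexp {0..n} (Gam \<rho> n (\<eta> d)) s m' m))))"
proof (intro conjI impI allI ballI)
  show "markov_fdd Pr {0..n} (\<lambda>d. Gam \<rho> n (\<eta> d)) D t T0 (\<lambda>s \<omega>. nc (M s \<omega>))"
  proof (rule markov_fdd_lumpable[OF finite_confN[OF A(1)] _ _ Lam_lumpable[OF A(1)] Pr Mval Mmeas Mmarkov])
    show "nc ` confN A n \<subseteq> {0..n}" using confN_D(2) by auto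
  qed simp
next
  \<comment> \<open>Every stationary vector of \<open>Gam\<close> is reversible.\<close>
  fix d :: int and \<gamma> :: "nat \<Rightarrow> real" and m m' :: nat and s :: real
  assume "(\<forall>m\<in>{0..n}. \<gamma> m \<ge> 0) \<and> (\<Sum>m\<in>{0..n}. \<gamma> m) = 1
      \<and> (\<forall>m'\<in>{0..n}. (\<Sum>m\<in>{0..n}. \<gamma> m * Gam \<rho> n (\<eta> d) m m') = 0)"
  then have "detailed_balance {0..n} \<gamma> (Gam \<rho> n (\<eta> d))"
    by (intro Gam_detailed_balance) auto
  then have "detailed_balance {0..n} \<gamma> (mexp {0..n} (Gam \<rho> n (\<eta> d)) s)"
    by (intro detailed_balance_mexp) simp
  moreover assume "m \<in> {0..n}" "m' \<in> {0..n}"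
  ultimately show "\<gamma> m * mexp {0..n} (Gam \<rho> n (\<eta> d)) s m m' = \<gamma> m' * mexp {0..n} (Gam \<rho> n (\<eta> d)) s m' m"
    unfolding detailed_balance_def by blast
qed

end
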